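(* Let $F$ be a Boolean formula over $n$ variables and $m\ge1$. If $|\mathrm{Sol}(F)|\ge 2^{m+3}$, then $\varphi^F_{holes}(m)$ is true.
   Context: $\mathrm{Sol}(F)\subseteq\{0,1\}^n$ is the set of satisfying assignments of $F$. $\mathcal{H}(n,m,2)$ is a fixed explicit pairwise independent family of hash functions $\{0,1\}^n\to\{0,1\}^m$: for $h$ uniform in the family, distinct $y_1,y_2$ and any $\alpha_1,\alpha_2\in\{0,1\}^m$, $\Pr[h(y_1)=\alpha_1\wedge h(y_2)=\alpha_2]=2^{-2m}$. The formula $\varphi^F_{holes}(m)$ is $\exists h_1,\dots,h_{m+1}\in\mathcal{H}(n,m,2)\ \forall\alpha\in\{0,1\}^m\ \exists z\in\{0,1\}^n:\ \bigvee_{i=1}^{m+1}(F(z)\wedge h_i(z)=\alpha)$, i.e. every $\alpha\in\{0,1\}^m$ is the image of some solution of $F$ under some $h_i$. *)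

theory Defs
  imports Complex_Main
begin

definition cube :: "nat \<Rightarrow> bool list set" where
  "cube k = {xs. length xs = k}"

datatype bform = Var nat | Tru | Fls | Neg bform | Conj bform bform | Disj bform bform

fun beval :: "bform \<Rightarrow> bool list \<Rightarrow> bool" where
  "beval (Var i) x = x ! i"
| "beval Tru x = True"
| "beval Fls x = False"
| "beval (Neg f) x = (\<not> beval f x)"
| "beval (Conj f g) x = (beval f x \<and> beval g x)"
| "beval (Disj f g) x = (beval f x \<or> beval g x)"

fun bvars :: "bform \<Rightarrow> nat set" where
  "bvars (Var i) = {i}"
| "bvars Tru = {}"
| "bvars Fls = {}"
| "bvars (Neg f) = bvars f"
| "bvars (Conj f g) = bvars f \<union> bvars g"
| "bvars (Disj f g) = bvars f \<union> bvars g"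

definition formula_over :: "nat \<Rightarrow> bform \<Rightarrow> bool" where
  "formula_over n F \<longleftrightarrow> bvars F \<subseteq> {..<n}"

definition Sol :: "nat \<Rightarrow> bform \<Rightarrow> bool list set" where
  "Sol n F = {z \<in> cube n. beval F z}"

text \<open>H is a pairwise independent family of hash functions {0,1}^n \<rightarrow> {0,1}^m,
  with h drawn uniformly from H: for distinct y1, y2 in {0,1}^n and any
  a1, a2 in {0,1}^m, Pr[h y1 = a1 \<and> h y2 = a2] = 2^(-2m).\<close>
definition pairwise_indep_family ::
  "nat \<Rightarrow> nat \<Rightarrow> (bool list \<Rightarrow> bool list) set \<Rightarrow> bool" where
  "pairwise_indep_family n m H \<longleftrightarrow>
     finite H \<and> H \<noteq> {} \<and>
     (\<forall>h\<in>H. \<forall>y\<in>cube n. h y \<in> cube m) \<and>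
     (\<forall>y1\<in>cube n. \<forall>y2\<in>cube n. \<forall>a1\<in>cube m. \<forall>a2\<in>cube m. y1 \<noteq> y2 \<longrightarrow>
        real (card {h\<in>H. h y1 = a1 \<and> h y2 = a2}) / real (card H) = 1 / 2 ^ (2 * m))"

definition phi_holes ::
  "nat \<Rightarrow> (bool list \<Rightarrow> bool list) set \<Rightarrow> bform \<Rightarrow> nat \<Rightarrow> bool" where
  "phi_holes n H F m \<longleftrightarrow>
     (\<exists>hs :: nat \<Rightarrow> (bool list \<Rightarrow> bool list). (\<forall>i\<in>{1..m+1}. hs i \<in> H) \<and>
        (\<forall>a\<in>cube m. \<exists>z\<in>cube n. \<exists>i\<in>{1..m+1}. beval F z \<and> hs i z = a))"

end

theory Submission
  imports Defs
begin

text \<open>Fix a target \<open>a \<in> {0,1}^m\<close> and let \<open>X h\<close> count the solutions that \<open>h\<close> maps to \<open>a\<close>.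
  Pairwise independence makes \<open>X\<close> have mean \<open>|Sol|/2^m\<close> and variance at most its mean, so by
  the second moment method a random \<open>h\<close> misses \<open>a\<close> with probability at most
  \<open>2^m/|Sol| \<le> 1/2\<close>. By averaging, one \<open>h\<close> then hits at least half of any set of targets;
  choosing hash functions greedily, \<open>m + 1\<close> of them hit all \<open>2^m\<close> targets.\<close>

lemma ex_le_average:
  fixes f :: "'a \<Rightarrow> nat"
  assumes "finite A" "A \<noteq> {}" "sum f A \<le> card A * c"
  obtains x where "x \<in> A" "f x \<le> c"
proof (rule ccontr)
  assume "\<not> thesis"
  with that have "\<And>x. x \<in> A \<Longrightarrow> Suc c \<le> f x" by (meson not_less_eq_eq)
  then have "card A * Suc c \<le> sum f A" using sum_bounded_below[of A "Suc c" f] by simp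
  moreover have "card A > 0" using assms by (simp add: card_gt_0_iff)
  ultimately show False using assms(3) by simp
qed

lemma sum_card_filter_swap:
  assumes "finite A" "finite B"
  shows "(\<Sum>a\<in>A. card {b\<in>B. R a b}) = (\<Sum>b\<in>B. card {a\<in>A. R a b})"
proof -
  have "(\<Sum>a\<in>A. card {b\<in>B. R a b}) = (\<Sum>a\<in>A. \<Sum>b\<in>B. of_bool (R a b))"
    using assms by (simp add: Int_def)
  also have "\<dots> = (\<Sum>b\<in>B. \<Sum>a\<in>A. of_bool (R a b))"
    by (rule sum.swap)
  also have "\<dots> = (\<Sum>b\<in>B. card {a\<in>A. R a b})"
    using assms by (simp add: Int_def)
  finally show ?thesis .
qed

lemma second_moment_bound:
  fixes H :: "'h set" and S :: "'y set" and P :: "'h \<Rightarrow> 'y \<Rightarrow> bool" and p :: real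
  assumes fin: "finite H" "finite S" and "p \<ge> 0"
    and single: "\<And>y. y \<in> S \<Longrightarrow> card {h\<in>H. P h y} = card H * p"
    and pair: "\<And>y1 y2. y1 \<in> S \<Longrightarrow> y2 \<in> S \<Longrightarrow> y1 \<noteq> y2 \<Longrightarrow>
                 card {h\<in>H. P h y1 \<and> P h y2} = card H * p\<^sup>2"
  shows "card {h\<in>H. \<forall>y\<in>S. \<not> P h y} * (card S * p) \<le> card H"
proof -
  define X where "X h = real (card {y\<in>S. P h y})" for h
  define N where "N = real (card H)"
  define s where "s = real (card S)"
  have first_moment: "(\<Sum>h\<in>H. X h) = N * s * p"
  proof -
    have "(\<Sum>h\<in>H. X h) = (\<Sum>y\<in>S. real (card {h\<in>H. P h y}))"
      unfolding X_def of_nat_sum[symmetric] sum_card_filter_swap[OF fin] ..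
    also have "\<dots> = N * s * p"
      using single by (simp add: N_def s_def)
    finally show ?thesis .
  qed
  have row: "(\<Sum>y2\<in>S. real (card {h\<in>H. P h y1 \<and> P h y2})) = N * p + (s - 1) * N * p\<^sup>2"
    if "y1 \<in> S" for y1
  proof -
    have off_diagonal: "(\<Sum>y2\<in>S - {y1}. real (card {h\<in>H. P h y1 \<and> P h y2})) = (\<Sum>y2\<in>S - {y1}. N * p\<^sup>2)"
      by (rule sum.cong) (use that pair in \<open>auto simp: N_def\<close>)
    have "(\<Sum>y2\<in>S. real (card {h\<in>H. P h y1 \<and> P h y2})) =
        real (card {h\<in>H. P h y1}) + (\<Sum>y2\<in>S - {y1}. real (card {h\<in>H. P h y1 \<and> P h y2}))"
      by (simp add: sum.remove[OF fin(2) that])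
    also have "\<dots> = N * p + (s - 1) * N * p\<^sup>2"
    proof -
      have "1 \<le> card S" using that fin by (auto simp: Suc_le_eq card_gt_0_iff)
      then show ?thesis
        using that fin single unfolding off_diagonal by (simp add: N_def s_def of_nat_diff)
    qed
    finally show ?thesis .
  qed
  have second_moment: "(\<Sum>h\<in>H. (X h)\<^sup>2) = s * (N * p + (s - 1) * N * p\<^sup>2)"
  proof -
    have sq: "(X h)\<^sup>2 = real (card {q\<in>S \<times> S. P h (fst q) \<and> P h (snd q)})" for h
    proof -
      have "{q\<in>S \<times> S. P h (fst q) \<and> P h (snd q)} = {y\<in>S. P h y} \<times> {y\<in>S. P h y}" by auto
      then show ?thesis by (simp add: X_def power2_eq_square card_cartesian_product)
    qed
    have "(\<Sum>h\<in>H. (X h)\<^sup>2) = (\<Sum>q\<in>S \<times> S. real (card {h\<in>H. P h (fst q) \<and> P h (snd q)}))"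
      using fin unfolding sq of_nat_sum[symmetric] by (subst sum_card_filter_swap) auto
    also have "\<dots> = (\<Sum>y1\<in>S. \<Sum>y2\<in>S. real (card {h\<in>H. P h y1 \<and> P h y2}))"
      by (simp add: sum.cartesian_product case_prod_beta)
    also have "\<dots> = s * (N * p + (s - 1) * N * p\<^sup>2)"
      using row by (simp add: s_def)
    finally show ?thesis .
  qed
  have variance: "(\<Sum>h\<in>H. (X h - s * p)\<^sup>2) = N * (s * p) - N * s * p\<^sup>2"
  proof -
    have "(\<Sum>h\<in>H. (X h - s * p)\<^sup>2) = (\<Sum>h\<in>H. (X h)\<^sup>2 - 2 * s * p * X h + (s * p)\<^sup>2)"
      by (intro sum.cong refl) (simp add: power2_diff algebra_simps)
    also have "\<dots> = (\<Sum>h\<in>H. (X h)\<^sup>2) - 2 * s * p * (\<Sum>h\<in>H. X h) + N * (s * p)\<^sup>2"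
      by (simp add: sum.distrib sum_subtractf sum_distrib_left N_def)
    finally show ?thesis
      using first_moment second_moment by (simp add: algebra_simps power2_eq_square)
  qed
  define Z where "Z = {h\<in>H. \<forall>y\<in>S. \<not> P h y}"
  have "real (card Z) * (s * p)\<^sup>2 = (\<Sum>h\<in>Z. (X h - s * p)\<^sup>2)"
  proof -
    have "X h = 0" if "h \<in> Z" for h
      using that by (auto simp: Z_def X_def card_eq_0_iff)
    then show ?thesis by simp
  qed
  also have "\<dots> \<le> (\<Sum>h\<in>H. (X h - s * p)\<^sup>2)"
    by (rule sum_mono2) (auto simp: Z_def fin)
  also have "\<dots> \<le> N * (s * p)"
    using variance by (simp add: s_def N_def)
  finally have "real (card Z) * (s * p) * (s * p) \<le> N * (s * p)"
    by (simp add: power2_eq_square mult.assoc)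
  moreover have "s * p \<ge> 0" using \<open>p \<ge> 0\<close> by (simp add: s_def)
  ultimately have "real (card Z) * (s * p) \<le> N"
    by (cases "s * p = 0") (auto simp: mult_le_cancel_right N_def)
  then show ?thesis by (simp add: Z_def N_def s_def)
qed

lemma ex_bad_for_at_most_half:
  assumes "finite H" "H \<noteq> {}" "finite U"
    and few_bad: "\<And>a. a \<in> U \<Longrightarrow> 2 * card {h\<in>H. Bad h a} \<le> card H"
  obtains h where "h \<in> H" "2 * card {a\<in>U. Bad h a} \<le> card U"
proof (rule ex_le_average[OF assms(1,2)])
  have "(\<Sum>h\<in>H. 2 * card {a\<in>U. Bad h a}) = (\<Sum>a\<in>U. 2 * card {h\<in>H. Bad h a})"
    using sum_card_filter_swap[OF assms(1,3), of Bad] by (simp add: sum_distrib_left[symmetric])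
  also have "\<dots> \<le> card H * card U"
    using sum_bounded_above[of U "\<lambda>a. 2 * card {h\<in>H. Bad h a}" "card H"] few_bad
    by (simp add: mult.commute)
  finally show "(\<Sum>h\<in>H. 2 * card {a\<in>U. Bad h a}) \<le> card H * card U" .
qed

lemma greedy_cover:
  assumes "finite H" "H \<noteq> {}" "finite U" "card U < 2 ^ k"
    and few_bad: "\<And>a. a \<in> U \<Longrightarrow> 2 * card {h\<in>H. Bad h a} \<le> card H"
  shows "\<exists>hs. (\<forall>i\<in>{1..k}. hs i \<in> H) \<and> (\<forall>a\<in>U. \<exists>i\<in>{1..k}. \<not> Bad (hs i) a)"
  using assms(3-5)
proof (induction k arbitrary: U)
  case 0
  then show ?case by simp
next
  case (Suc k)
  obtain h where "h \<in> H" and half: "2 * card {a\<in>U. Bad h a} \<le> card U"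
    using ex_bad_for_at_most_half[OF assms(1,2) Suc.prems(1)] Suc.prems(3) by blast
  have "card {a\<in>U. Bad h a} < 2 ^ k"
    using half Suc.prems(2) by simp
  then obtain hs where hs_in: "\<forall>i\<in>{1..k}. hs i \<in> H"
      and hs_cover: "\<forall>a\<in>{a\<in>U. Bad h a}. \<exists>i\<in>{1..k}. \<not> Bad (hs i) a"
    using Suc.IH[of "{a\<in>U. Bad h a}"] Suc.prems(1,3) by auto
  have "\<forall>i\<in>{1..Suc k}. (hs(Suc k := h)) i \<in> H"
    using hs_in \<open>h \<in> H\<close> by auto
  moreover have "\<forall>a\<in>U. \<exists>i\<in>{1..Suc k}. \<not> Bad ((hs(Suc k := h)) i) a"
  proof
    fix a assume "a \<in> U"
    show "\<exists>i\<in>{1..Suc k}. \<not> Bad ((hs(Suc k := h)) i) a"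
    proof (cases "Bad h a")
      case True
      then obtain i where "i \<in> {1..k}" "\<not> Bad (hs i) a"
        using hs_cover \<open>a \<in> U\<close> by auto
      then show ?thesis by (intro bexI[of _ i]) auto
    next
      case False
      then show ?thesis by (intro bexI[of _ "Suc k"]) auto
    qed
  qed
  ultimately show ?case by blast
qed

lemma card_cube: "card (cube k) = 2 ^ k"
  using card_lists_length_eq[of "UNIV :: bool set" k] by (simp add: cube_def)

lemma finite_cube: "finite (cube k)"
  by (simp add: cube_def finite_list_length)

lemma cube_other_point:
  assumes "0 < n" "y \<in> cube n"
  obtains y' where "y' \<in> cube n" "y' \<noteq> y"
proof (cases y)
  case Nil
  with assms show ?thesis by (simp add: cube_def)
next
  case (Cons b bs)
  with assms that[of "(\<not> b) # bs"] show ?thesis by (simp add: cube_def)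
qed

lemma pairwise_indep_family_joint:
  assumes "pairwise_indep_family n m H"
    and "y1 \<in> cube n" "y2 \<in> cube n" "y1 \<noteq> y2" "a1 \<in> cube m" "a2 \<in> cube m"
  shows "real (card {h\<in>H. h y1 = a1 \<and> h y2 = a2}) = real (card H) / 2 ^ (2 * m)"
proof -
  have "card H > 0" using assms(1) by (simp add: pairwise_indep_family_def card_gt_0_iff)
  moreover have "real (card {h\<in>H. h y1 = a1 \<and> h y2 = a2}) / real (card H) = 1 / 2 ^ (2 * m)"
    using assms unfolding pairwise_indep_family_def by blast
  ultimately show ?thesis by (simp add: field_simps)
qed

lemma pairwise_indep_family_marginal:
  assumes H: "pairwise_indep_family n m H"
    and "0 < n" "y \<in> cube n" "a \<in> cube m"
  shows "real (card {h\<in>H. h y = a}) = real (card H) / 2 ^ m"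
proof -
  obtain y' where y': "y' \<in> cube n" "y' \<noteq> y"
    using cube_other_point assms(2,3) by blast
  have "finite H" and range: "\<And>h. h \<in> H \<Longrightarrow> h y' \<in> cube m"
    using H y'(1) by (auto simp: pairwise_indep_family_def)
  have "{h\<in>H. h y = a} = (\<Union>a'\<in>cube m. {h\<in>H. h y = a \<and> h y' = a'})"
    using range by auto
  then have "card {h\<in>H. h y = a} = (\<Sum>a'\<in>cube m. card {h\<in>H. h y = a \<and> h y' = a'})"
    by (simp only:) (rule card_UN_disjoint, auto simp: finite_cube \<open>finite H\<close>)
  then have "real (card {h\<in>H. h y = a}) = (\<Sum>a'\<in>cube m. real (card H) / 2 ^ (2 * m))"
    using pairwise_indep_family_joint[OF H assms(3) y'(1)] y'(2) assms(4) by simp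
  also have "\<dots> = real (card H) / 2 ^ m"
    by (simp add: card_cube power_mult_distrib mult_2 power_add)
  finally show ?thesis .
qed

lemma card_hash_missing_le:
  assumes H: "pairwise_indep_family n m H"
    and "0 < n" "S \<subseteq> cube n" "a \<in> cube m"
  shows "real (card {h\<in>H. a \<notin> h ` S}) * card S \<le> card H * 2 ^ m"
proof -
  have "finite H" using H by (simp add: pairwise_indep_family_def)
  have "finite S" using assms(3) finite_cube finite_subset by blast
  have "real (card {h\<in>H. \<forall>y\<in>S. \<not> h y = a}) * (card S * (1 / 2 ^ m)) \<le> card H"
  proof (rule second_moment_bound[OF \<open>finite H\<close> \<open>finite S\<close>])
    show "real (card {h\<in>H. h y = a}) = card H * (1 / 2 ^ m)" if "y \<in> S" for y
      using pairwise_indep_family_marginal[OF H assms(2)] that assms(3,4) by auto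
    show "real (card {h\<in>H. h y1 = a \<and> h y2 = a}) = card H * (1 / 2 ^ m)\<^sup>2"
      if "y1 \<in> S" "y2 \<in> S" "y1 \<noteq> y2" for y1 y2
      using pairwise_indep_family_joint[OF H _ _ that(3) assms(4,4)] that(1,2) assms(3)
      by (auto simp: power_mult power2_eq_square mult_2 power_add)
  qed simp
  moreover have "{h\<in>H. \<forall>y\<in>S. \<not> h y = a} = {h\<in>H. a \<notin> h ` S}" by auto
  ultimately show ?thesis by (simp add: field_simps)
qed

lemma double_card_hash_missing_le:
  assumes H: "pairwise_indep_family n m H"
    and "S \<subseteq> cube n" "2 ^ (m + 1) \<le> card S" "a \<in> cube m"
  shows "2 * card {h\<in>H. a \<notin> h ` S} \<le> card H"
proof -
  have "2 ^ (m + 1) \<le> (2 :: nat) ^ n"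
    using order_trans[OF assms(3) card_mono[OF finite_cube assms(2)]] by (simp add: card_cube)
  then have "0 < n" using power_increasing_iff[of "2 :: nat" "m + 1" n] by simp
  have "(2 :: real) ^ (m + 1) \<le> card S"
    using assms(3) by (metis of_nat_le_iff of_nat_numeral of_nat_power)
  then have "real (card {h\<in>H. a \<notin> h ` S}) * 2 ^ (m + 1) \<le> real (card {h\<in>H. a \<notin> h ` S}) * card S"
    by (rule mult_left_mono) simp
  also have "\<dots> \<le> card H * 2 ^ m"
    using card_hash_missing_le[OF H \<open>0 < n\<close> assms(2,4)] .
  finally have "2 * real (card {h\<in>H. a \<notin> h ` S}) * 2 ^ m \<le> real (card H) * 2 ^ m"
    by (simp add: algebra_simps)
  then show ?thesis by simp
qed

theorem lemma5p2:
  fixes n m :: nat and F :: bform and H :: "(bool list \<Rightarrow> bool list) set"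
  assumes "formula_over n F"
    and "pairwise_indep_family n m H"
    and "m \<ge> 1"
    and "card (Sol n F) \<ge> 2 ^ (m + 3)"
  shows "phi_holes n H F m"
proof -
  define S where "S = Sol n F"
  have "S \<subseteq> cube n" by (auto simp: S_def Sol_def)
  have "finite H" "H \<noteq> {}" using assms(2) by (auto simp: pairwise_indep_family_def)
  have "(2 :: nat) ^ (m + 1) \<le> 2 ^ (m + 3)" by (rule power_increasing) simp_all
  then have "2 ^ (m + 1) \<le> card S" using assms(4) by (simp add: S_def)
  then have "2 * card {h\<in>H. a \<notin> h ` S} \<le> card H" if "a \<in> cube m" for a
    using double_card_hash_missing_le[OF assms(2) \<open>S \<subseteq> cube n\<close> _ that] by blast
  moreover have "card (cube m) < 2 ^ (m + 1)" by (simp add: card_cube)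
  ultimately obtain hs where hs_in: "\<forall>i\<in>{1..m + 1}. hs i \<in> H"
      and hs_cover: "\<forall>a\<in>cube m. \<exists>i\<in>{1..m + 1}. a \<in> hs i ` S"
    using greedy_cover[OF \<open>finite H\<close> \<open>H \<noteq> {}\<close> finite_cube, of m "m + 1" "\<lambda>h a. a \<notin> h ` S"]
    by auto
  have "\<forall>a\<in>cube m. \<exists>z\<in>cube n. \<exists>i\<in>{1..m + 1}. beval F z \<and> hs i z = a"
    using hs_cover by (fastforce simp: S_def Sol_def)
  with hs_in show ?thesis
    unfolding phi_holes_def by blast
qed

end
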